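(* Let $\delta'\in(0,1)$ and $\rho=(\rho_c,\rho_u,\rho_w)\in(0,\infty)^3$. On the event $\mathcal E_{U,m}(\delta')$, for every $\varphi\in\Omega_\rho$, \[ \sup_{X\in\mathcal X}|f(X;\varphi)|\le L_{1,m}(\delta')\sqrt{\rho_u^2+\rho_w^2}+\sigma_0\rho_c. \] Moreover, for every $\bar\nu\in(0,\infty)^3$ and every $\tilde f(\cdot;v)$ with $v\in\mathcal V_{\bar\nu}$, \[ \sup_{X\in\mathcal X}|\tilde f(X;v)|\le\sigma_0\bar\nu_c+\sigma_1\bar\nu_u+\sigma_1\sqrt d\,\bar\nu_w. \]
   Context: $\mathcal{X}=\{X\in\mathbb{R}^{d\times T}:\max_t\|X_t\|_2\le1\}$; each $X$ has a fixed query $q_X\in\mathbb{R}^d$, $\|q_X\|_2\le1$. Softmax $(\sigma_s(z))_t=e^{z_t}/\sum_se^{z_s}$, $J_s(z)=\operatorname{diag}(\sigma_s(z))-\sigma_s(z)\sigma_s(z)^\top$; $a(X;W)=X\sigma_s(X^\top Wq_X)$, $M(X;W)=XJ_s(X^\top Wq_X)X^\top$; $h(X;\theta)=\sigma(U^\top a(X;W))$; $f(X;\varphi)=m^{-1/2}\sum_{i=1}^mc_ih(X;\theta_i)$, $\varphi_i=(c_i,U_i,\operatorname{vec}(W_i))$. $\sigma$ twice differentiable with $|\sigma|\le\sigma_0,|\sigma'|\le\sigma_1,|\sigma''|\le\sigma_2$. $m$ even; symmetric initialization $\varphi^{(0)}$: for $i\le m/2$, independently, $W_i^{(0)}$ with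 i.i.d. $\mathcal N(0,1)$ entries, $U_i^{(0)}\sim\mathcal N(0,I_d)$, $c_i^{(0)}$ uniform on $\{\pm1\}$; $W_{i+m/2}^{(0)}=W_i^{(0)}$, $U_{i+m/2}^{(0)}=U_i^{(0)}$, $c_{i+m/2}^{(0)}=-c_i^{(0)}$. $\Omega_\rho=\{\varphi:|c_i-c_i^{(0)}|\le\rho_c/\sqrt m,\|U_i-U_i^{(0)}\|_2\le\rho_u/\sqrt m,\|W_i-W_i^{(0)}\|_F\le\rho_w/\sqrt m\ \forall i\}$. $B_{U,m}(\delta')=\sqrt d+\sqrt{2\log(m/(2\delta'))}+\rho_u/\sqrt m$, $L_{1,m}(\delta')=\sigma_1\sqrt{1+B_{U,m}(\delta')^2}$. $\mathcal E_{U,m}(\delta')=\{\max_{i\in[m]}\|U_i^{(0)}\|_2\le\sqrt d+\sqrt{2\log(m/(2\delta'))}\}$. With $\varphi_0=(c,U,\operatorname{vec}W)$ distributed as $\varphi_1^{(0)}$: $\phi_c(X)=\sigma(U^\top a(X;W))$, $\phi_u(X)=\sigma'(U^\top a(X;W))a(X;W)$, $\phi_w(X)=\sigma'(U^\top a(X;W))(M(X;W)U)q_X^\top$; $\tilde f(X;v)=\mathbb E[\phi_c(X)v_c(\varphi_0)]+\mathbb E[\langle\phi_u(X),v_u(\varphi_0)\rangle]+\mathbb E[\langle\phi_w(X),v_w(\varphi_0)\rangle_F]$; $\mathcal V_{\bar\nu}$: measurable $v=(v_c,v_u,v_w)$ with $\sup|v_c|\le\bar\nu_c$, $\sup\|v_u\|_2\le\bar\nu_u$,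 $\sup\|v_w\|_F\le\bar\nu_w$. *)

theory Defs
  imports "HOL-Probability.Probability"
begin

text \<open>Dimensions d and T are the finite index types 'd and 'T.
  Tokens X are real d x T matrices, encoded as real^'T^'d (row index 'd, column index 'T);
  column t of X is the token X_t.\<close>

definition token_set :: "(real^'T^'d) set" where
  "token_set = {X. \<forall>t. norm (column t X) \<le> 1}"

definition softmax :: "real^'T \<Rightarrow> real^'T" where
  "softmax z = (\<chi> t. exp (z$t) / (\<Sum>s\<in>UNIV. exp (z$s)))"

definition softmax_jac :: "real^'T \<Rightarrow> real^'T^'T" where
  "softmax_jac z = (\<chi> t s. (if t = s then softmax z $ t else 0) - softmax z $ t * softmax z $ s)"

definition attn :: "real^'T^'d \<Rightarrow> real^'d \<Rightarrow> real^'d^'d \<Rightarrow> real^'d" where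
  "attn X q W = X *v softmax (transpose X *v (W *v q))"

definition Mmat :: "real^'T^'d \<Rightarrow> real^'d \<Rightarrow> real^'d^'d \<Rightarrow> real^'d^'d" where
  "Mmat X q W = X ** softmax_jac (transpose X *v (W *v q)) ** transpose X"

definition hneuron :: "(real \<Rightarrow> real) \<Rightarrow> real^'T^'d \<Rightarrow> real^'d \<Rightarrow> real^'d \<Rightarrow> real^'d^'d \<Rightarrow> real" where
  "hneuron \<sigma> X q U W = \<sigma> (U \<bullet> attn X q W)"

definition fnet :: "(real \<Rightarrow> real) \<Rightarrow> nat \<Rightarrow> real^'T^'d \<Rightarrow> real^'d
    \<Rightarrow> (nat \<Rightarrow> real) \<Rightarrow> (nat \<Rightarrow> real^'d) \<Rightarrow> (nat \<Rightarrow> real^'d^'d) \<Rightarrow> real" where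
  "fnet \<sigma> m X q c U W = (1 / sqrt (real m)) * (\<Sum>i<m. c i * hneuron \<sigma> X q (U i) (W i))"

definition sym_init :: "nat \<Rightarrow> (nat \<Rightarrow> real) \<Rightarrow> (nat \<Rightarrow> real^'d) \<Rightarrow> (nat \<Rightarrow> real^'d^'d) \<Rightarrow> bool" where
  "sym_init m c0 U0 W0 \<longleftrightarrow> (\<forall>i < m div 2.
      c0 i \<in> {-1, 1} \<and> W0 (i + m div 2) = W0 i \<and> U0 (i + m div 2) = U0 i
      \<and> c0 (i + m div 2) = - c0 i)"

text \<open>Norm on real^'d^'d is the Frobenius norm.\<close>
definition Omega :: "nat \<Rightarrow> real \<Rightarrow> real \<Rightarrow> real \<Rightarrow> (nat \<Rightarrow> real) \<Rightarrow> (nat \<Rightarrow> real^'d) \<Rightarrow> (nat \<Rightarrow> real^'d^'d)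
    \<Rightarrow> ((nat \<Rightarrow> real) \<times> (nat \<Rightarrow> real^'d) \<times> (nat \<Rightarrow> real^'d^'d)) set" where
  "Omega m \<rho>c \<rho>u \<rho>w c0 U0 W0 = {(c, U, W). \<forall>i < m.
      \<bar>c i - c0 i\<bar> \<le> \<rho>c / sqrt (real m) \<and> norm (U i - U0 i) \<le> \<rho>u / sqrt (real m)
      \<and> norm (W i - W0 i) \<le> \<rho>w / sqrt (real m)}"

definition B_U :: "nat \<Rightarrow> nat \<Rightarrow> real \<Rightarrow> real \<Rightarrow> real" where
  "B_U d m \<delta> \<rho>u = sqrt (real d) + sqrt (2 * ln (real m / (2 * \<delta>))) + \<rho>u / sqrt (real m)"

definition L1 :: "real \<Rightarrow> nat \<Rightarrow> nat \<Rightarrow> real \<Rightarrow> real \<Rightarrow> real" where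
  "L1 \<sigma>1 d m \<delta> \<rho>u = \<sigma>1 * sqrt (1 + (B_U d m \<delta> \<rho>u)^2)"

definition event_U :: "nat \<Rightarrow> nat \<Rightarrow> real \<Rightarrow> (nat \<Rightarrow> real^'d) \<Rightarrow> bool" where
  "event_U d m \<delta> U0 \<longleftrightarrow> (\<forall>i < m. norm (U0 i) \<le> sqrt (real d) + sqrt (2 * ln (real m / (2 * \<delta>))))"

definition gauss1 :: "real measure" where
  "gauss1 = density lborel std_normal_density"

definition gauss_vec :: "(real^'d) measure" where
  "gauss_vec = distr (PiM UNIV (\<lambda>_::'d. gauss1)) borel (\<lambda>f. \<chi> i. f i)"

definition gauss_mat :: "(real^'d^'d) measure" where
  "gauss_mat = distr (PiM UNIV (\<lambda>_::('d \<times> 'd). gauss1)) borel (\<lambda>f. \<chi> i j. f (i, j))"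

definition sign_meas :: "real measure" where
  "sign_meas = measure_pmf (pmf_of_set {-1, 1})"

definition init_meas :: "(real \<times> (real^'d) \<times> (real^'d^'d)) measure" where
  "init_meas = sign_meas \<Otimes>\<^sub>M (gauss_vec \<Otimes>\<^sub>M gauss_mat)"

definition phi_c :: "(real \<Rightarrow> real) \<Rightarrow> real^'T^'d \<Rightarrow> real^'d \<Rightarrow> real \<times> (real^'d) \<times> (real^'d^'d) \<Rightarrow> real" where
  "phi_c \<sigma> X q p = (case p of (c, U, W) \<Rightarrow> \<sigma> (U \<bullet> attn X q W))"

definition phi_u :: "(real \<Rightarrow> real) \<Rightarrow> real^'T^'d \<Rightarrow> real^'d \<Rightarrow> real \<times> (real^'d) \<times> (real^'d^'d) \<Rightarrow> real^'d" where
  "phi_u \<sigma>' X q p = (case p of (c, U, W) \<Rightarrow> \<sigma>' (U \<bullet> attn X q W) *\<^sub>R attn X q W)"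

definition phi_w :: "(real \<Rightarrow> real) \<Rightarrow> real^'T^'d \<Rightarrow> real^'d \<Rightarrow> real \<times> (real^'d) \<times> (real^'d^'d) \<Rightarrow> real^'d^'d" where
  "phi_w \<sigma>' X q p = (case p of (c, U, W) \<Rightarrow>
      \<sigma>' (U \<bullet> attn X q W) *\<^sub>R (\<chi> i j. (Mmat X q W *v U) $ i * q $ j))"

text \<open>f-tilde(X;v); inner product on real^'d^'d is the Frobenius inner product.\<close>
definition ftilde :: "(real \<Rightarrow> real) \<Rightarrow> (real \<Rightarrow> real) \<Rightarrow> real^'T^'d \<Rightarrow> real^'d
    \<Rightarrow> (real \<times> (real^'d) \<times> (real^'d^'d) \<Rightarrow> real)
    \<Rightarrow> (real \<times> (real^'d) \<times> (real^'d^'d) \<Rightarrow> real^'d)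
    \<Rightarrow> (real \<times> (real^'d) \<times> (real^'d^'d) \<Rightarrow> real^'d^'d) \<Rightarrow> real" where
  "ftilde \<sigma> \<sigma>' X q vc vu vw =
      (\<integral>p. phi_c \<sigma> X q p * vc p \<partial>init_meas)
    + (\<integral>p. phi_u \<sigma>' X q p \<bullet> vu p \<partial>init_meas)
    + (\<integral>p. phi_w \<sigma>' X q p \<bullet> vw p \<partial>init_meas)"

end

theory Submission
  imports Defs
begin

(* At a symmetric initialization the two halves of the network cancel, so f(X; phi) equals the
   difference between the current and the initial network: m terms of size O(1 / sqrt m).
   Each neuron sigma (U . a(X;W)) is sigma1-Lipschitz in U . a(X;W). The attention output
   a(X;W) is a convex combination of tokens, so it has norm at most 1, and W |-> U0 . a(X;W)
   is (norm U0)-Lipschitz because the derivative of a softmax average along a line is a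
   covariance under the softmax weights, bounded by Cauchy-Schwarz. A two-dimensional
   Cauchy-Schwarz inequality combines the U- and W-displacements into
   sqrt (1 + norm U0^2) * sqrt (rho_u^2 + rho_w^2).
   For f-tilde, |phi_c| <= sigma0, norm phi_u <= sigma1 and norm phi_w <= sigma1 * norm U,
   because M(X;W) is again a softmax covariance, hence a contraction; and
   E (norm U) <= sqrt (E (norm U^2)) = sqrt d by Jensen's inequality. *)

lemma weighted_covariance_bound:
  fixes p a b :: "'t::finite \<Rightarrow> real"
  assumes p_nonneg: "\<And>t. 0 \<le> p t" and p_sum: "(\<Sum>t\<in>UNIV. p t) = 1"
    and a_bound: "\<And>t. \<bar>a t\<bar> \<le> A" and b_bound: "\<And>t. \<bar>b t\<bar> \<le> B"
  shows "\<bar>\<Sum>t\<in>UNIV. p t * b t * (a t - (\<Sum>s\<in>UNIV. p s * a s))\<bar> \<le> A * B"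
proof -
  define mean where "mean = (\<Sum>s\<in>UNIV. p s * a s)"
  have second_moment_le: "(\<Sum>t\<in>UNIV. p t * (f t)\<^sup>2) \<le> C\<^sup>2" if "\<And>t. \<bar>f t\<bar> \<le> C" for f :: "'t \<Rightarrow> real" and C
  proof -
    have "(\<Sum>t\<in>UNIV. p t * (f t)\<^sup>2) \<le> (\<Sum>t\<in>UNIV. p t * C\<^sup>2)"
      by (intro sum_mono mult_left_mono p_nonneg) (metis abs_ge_zero power2_abs power_mono that)
    also have "\<dots> = C\<^sup>2"
      using p_sum by (simp add: sum_distrib_right[symmetric])
    finally show ?thesis .
  qed
  have "(\<Sum>t\<in>UNIV. p t * (a t - mean)\<^sup>2)
      = (\<Sum>t\<in>UNIV. p t * (a t)\<^sup>2) - 2 * mean * (\<Sum>t\<in>UNIV. p t * a t) + mean\<^sup>2 * (\<Sum>t\<in>UNIV. p t)"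
    by (simp add: power2_diff algebra_simps sum.distrib sum_subtractf sum_distrib_left sum_distrib_right)
  also have "\<dots> = (\<Sum>t\<in>UNIV. p t * (a t)\<^sup>2) - mean\<^sup>2"
    by (simp add: p_sum mean_def power2_eq_square)
  finally have variance: "(\<Sum>t\<in>UNIV. p t * (a t - mean)\<^sup>2) = (\<Sum>t\<in>UNIV. p t * (a t)\<^sup>2) - mean\<^sup>2" .
  have "(\<Sum>t\<in>UNIV. p t * b t * (a t - mean))\<^sup>2
      = (\<Sum>t\<in>UNIV. (sqrt (p t) * b t) * (sqrt (p t) * (a t - mean)))\<^sup>2"
  proof -
    have weights: "sqrt (p t) * b t * (sqrt (p t) * (a t - mean)) = p t * b t * (a t - mean)" for t
      using real_sqrt_mult_self[of "p t"] p_nonneg[of t] by (simp add: mult_ac)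
    show ?thesis by (simp only: weights)
  qed
  also have "\<dots> \<le> (\<Sum>t\<in>UNIV. (sqrt (p t) * b t)\<^sup>2) * (\<Sum>t\<in>UNIV. (sqrt (p t) * (a t - mean))\<^sup>2)"
    by (rule Cauchy_Schwarz_ineq_sum)
  also have "\<dots> = (\<Sum>t\<in>UNIV. p t * (b t)\<^sup>2) * (\<Sum>t\<in>UNIV. p t * (a t - mean)\<^sup>2)"
    by (simp add: power_mult_distrib p_nonneg)
  also have "\<dots> \<le> B\<^sup>2 * A\<^sup>2"
  proof (intro mult_mono)
    show "(\<Sum>t\<in>UNIV. p t * (b t)\<^sup>2) \<le> B\<^sup>2"
      using b_bound by (rule second_moment_le)
    show "(\<Sum>t\<in>UNIV. p t * (a t - mean)\<^sup>2) \<le> A\<^sup>2"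
      unfolding variance using second_moment_le[of a A, OF a_bound] zero_le_power2[of mean] by linarith
  qed (simp_all add: sum_nonneg p_nonneg)
  finally have "(\<Sum>t\<in>UNIV. p t * b t * (a t - mean))\<^sup>2 \<le> (A * B)\<^sup>2"
    by (simp add: power_mult_distrib mult.commute)
  moreover have "0 \<le> A * B"
    using a_bound b_bound by (meson abs_ge_zero order_trans mult_nonneg_nonneg)
  ultimately show ?thesis
    unfolding mean_def by (metis abs_le_square_iff abs_of_nonneg)
qed

lemma real_Cauchy_Schwarz_2:
  fixes a b x y :: real
  shows "a * x + b * y \<le> sqrt (a\<^sup>2 + b\<^sup>2) * sqrt (x\<^sup>2 + y\<^sup>2)"
proof -
  have "(a * x + b * y)\<^sup>2 \<le> (a\<^sup>2 + b\<^sup>2) * (x\<^sup>2 + y\<^sup>2)"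
    using zero_le_power2[of "a * y - b * x"] by (simp add: power2_eq_square algebra_simps)
  then have "\<bar>a * x + b * y\<bar> \<le> sqrt ((a\<^sup>2 + b\<^sup>2) * (x\<^sup>2 + y\<^sup>2))"
    using real_sqrt_le_mono by fastforce
  then show ?thesis
    by (simp add: real_sqrt_mult)
qed

lemma norm_matrix_vector_mult_le:
  fixes A :: "real^'n^'m" and x :: "real^'n"
  shows "norm (A *v x) \<le> norm A * norm x"
proof -
  have "(norm (A *v x))\<^sup>2 = (\<Sum>i\<in>UNIV. ((A *v x) $ i)\<^sup>2)"
    unfolding power2_norm_eq_inner by (simp add: inner_vec_def power2_eq_square)
  also have "\<dots> = (\<Sum>i\<in>UNIV. (A $ i \<bullet> x)\<^sup>2)"
    by (simp only: matrix_vector_mul_component)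
  also have "\<dots> \<le> (\<Sum>i\<in>UNIV. (norm (A $ i))\<^sup>2 * (norm x)\<^sup>2)"
    by (intro sum_mono) (metis Cauchy_Schwarz_ineq power2_norm_eq_inner power_mult_distrib)
  also have "\<dots> = (norm A * norm x)\<^sup>2"
    by (simp add: power_mult_distrib power2_norm_eq_inner inner_vec_def[of A] flip: sum_distrib_right)
  finally show ?thesis
    by (rule power2_le_imp_le) simp
qed

lemma norm_outer_product:
  fixes a :: "real^'m" and b :: "real^'n"
  shows "norm (\<chi> i j. a $ i * b $ j) = norm a * norm b"
proof -
  have "(\<chi> i j. a $ i * b $ j) \<bullet> (\<chi> i j. a $ i * b $ j) = (a \<bullet> a) * (b \<bullet> b)"
    by (simp add: inner_vec_def sum_distrib_left sum_distrib_right mult_ac) (rule sum.swap)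
  then show ?thesis
    by (simp add: norm_eq_sqrt_inner real_sqrt_mult)
qed

(* Unlike integral_abs_bound_integral, f need not be integrable (otherwise its integral is 0). *)
lemma abs_integral_le_integral:
  fixes f g :: "'a \<Rightarrow> real"
  assumes "integrable M g" and "\<And>x. \<bar>f x\<bar> \<le> g x"
  shows "\<bar>integral\<^sup>L M f\<bar> \<le> integral\<^sup>L M g"
proof -
  have "\<bar>integral\<^sup>L M f\<bar> \<le> (\<integral>x. norm (f x) \<partial>M)"
    using integral_norm_bound[of M f] by simp
  also have "\<dots> \<le> integral\<^sup>L M g"
    using assms by (intro integral_mono') (auto intro: order_trans[OF abs_ge_zero])
  finally show ?thesis .
qed

lemma (in prob_space) expectation_le_sqrt_second_moment:
  fixes X :: "'a \<Rightarrow> real"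
  assumes "X \<in> borel_measurable M" and "integrable M (\<lambda>x. (X x)\<^sup>2)"
  shows "expectation X \<le> sqrt (expectation (\<lambda>x. (X x)\<^sup>2))"
proof -
  have "integrable M X"
    using assms by (rule square_integrable_imp_integrable)
  then have "(expectation X)\<^sup>2 \<le> expectation (\<lambda>x. (X x)\<^sup>2)"
    using assms(2) by (intro jensens_inequality[where I = UNIV]) (simp_all add: convex_power2)
  then show ?thesis
    by (metis real_le_rsqrt real_sqrt_abs abs_ge_self order_trans)
qed

lemma (in prob_space) distr_pair_snd:
  assumes "sigma_finite_measure N"
  shows "distr (M \<Otimes>\<^sub>M N) N snd = N"
proof (intro measure_eqI)
  interpret N: sigma_finite_measure N by fact
  fix A assume A: "A \<in> sets (distr (M \<Otimes>\<^sub>M N) N snd)"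
  then have "emeasure (distr (M \<Otimes>\<^sub>M N) N snd) A = emeasure (M \<Otimes>\<^sub>M N) (space M \<times> A)"
    by (auto simp: emeasure_distr space_pair_measure dest: sets.sets_into_space
        intro!: arg_cong2[where f = emeasure])
  with A show "emeasure (distr (M \<Otimes>\<^sub>M N) N snd) A = emeasure N A"
    by (simp add: N.emeasure_pair_measure_Times emeasure_space_1)
qed simp

lemma borel_measurable_vec:
  fixes F :: "'a \<Rightarrow> ('b::euclidean_space)^'n"
  assumes "\<And>i. (\<lambda>x. F x $ i) \<in> borel_measurable M"
  shows "F \<in> borel_measurable M"
proof (subst borel_measurable_euclidean_space, intro ballI)
  fix b :: "'b^'n"
  assume "b \<in> Basis"
  then obtain i u where b: "b = axis i u" "u \<in> Basis"
    unfolding Basis_vec_def by auto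
  have "(\<lambda>x. F x $ i \<bullet> u) \<in> borel_measurable M"
    using assms[of i] by measurable
  then show "(\<lambda>x. F x \<bullet> b) \<in> borel_measurable M"
    unfolding b inner_axis .
qed

lemma softmax_nth_pos: "0 < softmax z $ t"
  unfolding softmax_def by (auto intro!: divide_pos_pos sum_pos)

lemma sum_softmax: "(\<Sum>t\<in>UNIV. softmax z $ t) = 1"
proof -
  have "(\<Sum>s\<in>UNIV. exp (z $ s)) > 0" by (auto intro!: sum_pos)
  then show ?thesis unfolding softmax_def by (simp flip: sum_divide_distrib)
qed

lemma softmax_segment_has_real_derivative:
  fixes z h :: "real^'t"
  defines "p \<tau> \<equiv> softmax (z + \<tau> *\<^sub>R h)"
  shows "((\<lambda>\<tau>. p \<tau> $ t) has_real_derivative p \<tau> $ t * (h $ t - (\<Sum>s\<in>UNIV. p \<tau> $ s * h $ s))) (at \<tau>)"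
proof -
  define e where "e \<tau> s = exp (z $ s + \<tau> * h $ s)" for \<tau> s
  define S where "S \<tau> = (\<Sum>s\<in>UNIV. e \<tau> s)" for \<tau>
  have p_eq: "p \<tau> $ s = e \<tau> s / S \<tau>" for \<tau> s
    unfolding p_def softmax_def e_def S_def by simp
  have S_pos: "0 < S \<tau>"
    unfolding S_def e_def by (auto intro!: sum_pos)
  have "((\<lambda>\<tau>. e \<tau> t / S \<tau>) has_real_derivative
      (e \<tau> t * h $ t * S \<tau> - e \<tau> t * (\<Sum>s\<in>UNIV. e \<tau> s * h $ s)) / (S \<tau> * S \<tau>)) (at \<tau>)"
    using S_pos unfolding S_def e_def by (auto intro!: derivative_eq_intros)
  moreover have "(e \<tau> t * h $ t * S \<tau> - e \<tau> t * (\<Sum>s\<in>UNIV. e \<tau> s * h $ s)) / (S \<tau> * S \<tau>)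
      = e \<tau> t / S \<tau> * (h $ t - (\<Sum>s\<in>UNIV. e \<tau> s / S \<tau> * h $ s))"
    using S_pos by (simp add: field_simps sum_divide_distrib[symmetric])
  ultimately show ?thesis
    unfolding p_eq by simp
qed

lemma abs_softmax_average_diff_le:
  fixes z h :: "real^'t" and k :: "'t \<Rightarrow> real"
  assumes h_bound: "\<And>t. \<bar>h $ t\<bar> \<le> A" and k_bound: "\<And>t. \<bar>k t\<bar> \<le> B"
  shows "\<bar>(\<Sum>t\<in>UNIV. k t * softmax (z + h) $ t) - (\<Sum>t\<in>UNIV. k t * softmax z $ t)\<bar> \<le> A * B"
proof -
  define p where "p \<tau> = softmax (z + \<tau> *\<^sub>R h)" for \<tau>
  define g where "g \<tau> = (\<Sum>t\<in>UNIV. k t * p \<tau> $ t)" for \<tau>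
  define g' where "g' \<tau> = (\<Sum>t\<in>UNIV. p \<tau> $ t * k t * (h $ t - (\<Sum>s\<in>UNIV. p \<tau> $ s * h $ s)))" for \<tau>
  have "(g has_real_derivative g' \<tau>) (at \<tau>)" for \<tau>
  proof -
    have "(g has_real_derivative (\<Sum>t\<in>UNIV. k t * (p \<tau> $ t * (h $ t - (\<Sum>s\<in>UNIV. p \<tau> $ s * h $ s))))) (at \<tau>)"
      unfolding g_def p_def by (intro DERIV_sum DERIV_cmult softmax_segment_has_real_derivative)
    then show ?thesis
      by (simp add: g'_def mult_ac)
  qed
  moreover have "\<bar>g' \<tau>\<bar> \<le> A * B" for \<tau>
    unfolding g'_def
    by (rule weighted_covariance_bound) (simp_all add: p_def less_imp_le[OF softmax_nth_pos] sum_softmax h_bound k_bound)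
  ultimately have "\<bar>g 1 - g 0\<bar> \<le> A * B * \<bar>1 - 0\<bar>"
    using field_differentiable_bound[OF convex_UNIV, of g g' "A * B" 1 0] by simp
  then show ?thesis
    by (simp add: g_def p_def)
qed

lemma transpose_matrix_vector_nth: "(transpose X *v v) $ t = column t X \<bullet> v"
  by (simp add: matrix_vector_mult_def transpose_def column_def inner_vec_def mult.commute)

lemma token_set_abs_inner_column_le:
  assumes "X \<in> token_set"
  shows "\<bar>column t X \<bullet> v\<bar> \<le> norm v"
proof -
  have "\<bar>column t X \<bullet> v\<bar> \<le> norm (column t X) * norm v" by (rule Cauchy_Schwarz_ineq2)
  also have "\<dots> \<le> norm v"
    using assms by (simp add: token_set_def mult_left_le_one_le)
  finally show ?thesis .
qed

lemma inner_attn: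
  "U \<bullet> attn X q W = (\<Sum>t\<in>UNIV. (U \<bullet> column t X) * softmax (transpose X *v (W *v q)) $ t)"
  unfolding attn_def matrix_mult_sum
  by (simp add: inner_sum_right scalar_mult_eq_scaleR mult.commute)

lemma norm_attn_le_1:
  assumes "X \<in> token_set"
  shows "norm (attn X q W) \<le> 1"
proof -
  let ?p = "softmax (transpose X *v (W *v q))"
  have "norm (attn X q W) = norm (\<Sum>t\<in>UNIV. ?p $ t *\<^sub>R column t X)"
    unfolding attn_def matrix_mult_sum by (simp add: scalar_mult_eq_scaleR)
  also have "\<dots> \<le> (\<Sum>t\<in>UNIV. ?p $ t)"
  proof (rule sum_norm_le)
    fix t
    have "norm (column t X) \<le> 1"
      using assms by (simp add: token_set_def)
    then show "norm (?p $ t *\<^sub>R column t X) \<le> ?p $ t"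
      using softmax_nth_pos[of "transpose X *v (W *v q)" t] by (simp add: mult_left_le)
  qed
  also have "\<dots> = 1" by (rule sum_softmax)
  finally show ?thesis .
qed

lemma abs_inner_attn_diff_le:
  assumes X: "X \<in> token_set" and q: "norm q \<le> 1"
  shows "\<bar>U \<bullet> attn X q W - U \<bullet> attn X q W0\<bar> \<le> norm (W - W0) * norm U"
proof -
  define h where "h = transpose X *v ((W - W0) *v q)"
  have shift: "transpose X *v (W *v q) = transpose X *v (W0 *v q) + h"
    unfolding h_def by (simp add: matrix_vector_mult_diff_rdistrib matrix_vector_mult_diff_distrib)
  have "\<bar>h $ t\<bar> \<le> norm (W - W0)" for t
  proof -
    have "\<bar>h $ t\<bar> \<le> norm ((W - W0) *v q)"
      unfolding h_def transpose_matrix_vector_nth by (rule token_set_abs_inner_column_le[OF X])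
    also have "\<dots> \<le> norm (W - W0) * norm q" by (rule norm_matrix_vector_mult_le)
    also have "\<dots> \<le> norm (W - W0)" using q by (simp add: mult_left_le)
    finally show ?thesis .
  qed
  moreover have "\<bar>U \<bullet> column t X\<bar> \<le> norm U" for t
    using token_set_abs_inner_column_le[OF X] by (simp add: inner_commute)
  ultimately show ?thesis
    unfolding inner_attn shift by (rule abs_softmax_average_diff_le)
qed

lemma abs_hneuron_diff_le:
  fixes \<sigma> \<sigma>' :: "real \<Rightarrow> real"
  assumes deriv: "\<And>x. (\<sigma> has_real_derivative \<sigma>' x) (at x)" and bd1: "\<And>x. \<bar>\<sigma>' x\<bar> \<le> \<sigma>1"
    and X: "X \<in> token_set" and q: "norm q \<le> 1"
  shows "\<bar>hneuron \<sigma> X q U W - hneuron \<sigma> X q U0 W0\<bar> \<le> \<sigma>1 * (norm (U - U0) + norm U0 * norm (W - W0))"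
proof -
  have "U \<bullet> attn X q W - U0 \<bullet> attn X q W0
      = (U - U0) \<bullet> attn X q W + (U0 \<bullet> attn X q W - U0 \<bullet> attn X q W0)"
    by (simp add: inner_diff_left)
  moreover have "\<bar>(U - U0) \<bullet> attn X q W\<bar> \<le> norm (U - U0)"
    by (rule order_trans[OF Cauchy_Schwarz_ineq2]) (simp add: mult_left_le norm_attn_le_1[OF X])
  moreover have "\<bar>U0 \<bullet> attn X q W - U0 \<bullet> attn X q W0\<bar> \<le> norm U0 * norm (W - W0)"
    using abs_inner_attn_diff_le[OF X q] by (simp add: mult.commute)
  ultimately have "\<bar>U \<bullet> attn X q W - U0 \<bullet> attn X q W0\<bar> \<le> norm (U - U0) + norm U0 * norm (W - W0)"
    by linarith
  moreover have "\<bar>\<sigma> (U \<bullet> attn X q W) - \<sigma> (U0 \<bullet> attn X q W0)\<bar> \<le> \<sigma>1 * \<bar>U \<bullet> attn X q W - U0 \<bullet> attn X q W0\<bar>"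
    using field_differentiable_bound[OF convex_UNIV, of \<sigma> \<sigma>' \<sigma>1] deriv bd1 by simp
  moreover have "0 \<le> \<sigma>1"
    using bd1 by (meson abs_ge_zero order_trans)
  ultimately show ?thesis
    unfolding hneuron_def by (meson mult_left_mono order_trans)
qed

lemma softmax_jac_mult_vec_nth:
  "(softmax_jac z *v k) $ t = softmax z $ t * (k $ t - (\<Sum>s\<in>UNIV. softmax z $ s * k $ s))"
proof -
  have "(softmax_jac z *v k) $ t
      = (\<Sum>s\<in>UNIV. (if t = s then softmax z $ t * k $ s else 0) - softmax z $ t * (softmax z $ s * k $ s))"
    unfolding matrix_vector_mult_def softmax_jac_def vec_lambda_beta
    by (intro sum.cong) (auto simp: algebra_simps)
  then show ?thesis
    by (simp add: sum_subtractf sum_distrib_left right_diff_distrib)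
qed

lemma norm_Mmat_mult_le:
  assumes X: "X \<in> token_set"
  shows "norm (Mmat X q W *v U) \<le> norm U"
proof -
  define z where "z = transpose X *v (W *v q)"
  define k where "k = transpose X *v U"
  define y where "y = Mmat X q W *v U"
  have "y = X *v (softmax_jac z *v k)"
    unfolding y_def Mmat_def z_def k_def by (simp only: matrix_vector_mul_assoc matrix_mul_assoc)
  then have "y = (\<Sum>t\<in>UNIV. (softmax_jac z *v k) $ t *\<^sub>R column t X)"
    by (simp only: matrix_mult_sum scalar_mult_eq_scaleR)
  then have "y \<bullet> y = (\<Sum>t\<in>UNIV. (softmax_jac z *v k) $ t * (y \<bullet> column t X))"
    by (metis (no_types, lifting) inner_scaleR_right inner_sum_right sum.cong)
  also have "\<dots> = (\<Sum>t\<in>UNIV. softmax z $ t * (y \<bullet> column t X) * (k $ t - (\<Sum>s\<in>UNIV. softmax z $ s * k $ s)))"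
    by (simp add: softmax_jac_mult_vec_nth mult_ac)
  also have "\<bar>\<dots>\<bar> \<le> norm U * norm y"
  proof (rule weighted_covariance_bound)
    show "\<bar>k $ t\<bar> \<le> norm U" for t
      unfolding k_def transpose_matrix_vector_nth by (rule token_set_abs_inner_column_le[OF X])
    show "\<bar>y \<bullet> column t X\<bar> \<le> norm y" for t
      using token_set_abs_inner_column_le[OF X] by (simp add: inner_commute)
  qed (simp_all add: less_imp_le[OF softmax_nth_pos] sum_softmax)
  finally have "norm y * norm y \<le> norm U * norm y"
    by (simp add: norm_eq_sqrt_inner)
  then show ?thesis
    unfolding y_def[symmetric] by (cases "norm y = 0") (auto simp: mult_le_cancel_right)
qed

lemma sum_sym_init_eq_0:
  assumes init: "sym_init m c0 U0 W0" and m_even: "even m"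
  shows "(\<Sum>i<m. c0 i * g (U0 i) (W0 i)) = 0"
proof -
  define n where "n = m div 2"
  have "m = n + n"
    using m_even unfolding n_def by presburger
  have split: "(\<Sum>i<n + n. F i) = (\<Sum>i<n. F i + F (i + n))" for F :: "nat \<Rightarrow> real"
  proof -
    have "(\<Sum>i<n + n. F i) = (\<Sum>i<n. F i) + (\<Sum>i\<in>{n..<n + n}. F i)"
      by (simp add: lessThan_atLeast0 sum.atLeastLessThan_concat)
    also have "(\<Sum>i\<in>{n..<n + n}. F i) = (\<Sum>i<n. F (i + n))"
      using sum.shift_bounds_nat_ivl[of F 0 n n] by (simp add: lessThan_atLeast0)
    finally show ?thesis by (simp add: sum.distrib)
  qed
  have "(\<Sum>i<m. c0 i * g (U0 i) (W0 i))
      = (\<Sum>i<n. c0 i * g (U0 i) (W0 i) + c0 (i + n) * g (U0 (i + n)) (W0 (i + n)))"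
    unfolding \<open>m = n + n\<close> by (rule split)
  also have "\<dots> = 0"
    using init by (intro sum.neutral) (simp add: sym_init_def n_def)
  finally show ?thesis .
qed

lemma sym_init_abs_c0:
  assumes init: "sym_init m c0 U0 W0" and m_even: "even m" and i: "i < m"
  shows "\<bar>c0 i\<bar> = 1"
proof (cases "i < m div 2")
  case True
  then show ?thesis using init by (auto simp: sym_init_def)
next
  case False
  define j where "j = i - m div 2"
  have "i = j + m div 2" "j < m div 2"
    using False i m_even by (auto simp: j_def)
  then have "c0 i = - c0 j" "c0 j \<in> {-1, 1}"
    using init unfolding sym_init_def by auto
  then show ?thesis by auto
qed

lemma neuron_term_diff_le:
  fixes \<sigma> \<sigma>' :: "real \<Rightarrow> real"
  assumes deriv: "\<And>x. (\<sigma> has_real_derivative \<sigma>' x) (at x)"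
    and bd0: "\<And>x. \<bar>\<sigma> x\<bar> \<le> \<sigma>0" and bd1: "\<And>x. \<bar>\<sigma>' x\<bar> \<le> \<sigma>1"
    and X: "X \<in> token_set" and q: "norm q \<le> 1"
    and c0: "\<bar>c0\<bar> = 1" and U0: "norm U0 \<le> B" and s: "0 < s"
    and c_close: "\<bar>c - c0\<bar> \<le> \<rho>c / s"
    and U_close: "norm (U - U0) \<le> \<rho>u / s" and W_close: "norm (W - W0) \<le> \<rho>w / s"
  shows "\<bar>c * hneuron \<sigma> X q U W - c0 * hneuron \<sigma> X q U0 W0\<bar>
    \<le> (\<sigma>1 * sqrt (1 + B\<^sup>2) * sqrt (\<rho>u\<^sup>2 + \<rho>w\<^sup>2) + \<sigma>0 * \<rho>c) / s"
proof -
  let ?h = "hneuron \<sigma> X q U W"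
  let ?h_init = "hneuron \<sigma> X q U0 W0"
  have \<sigma>1_nonneg: "0 \<le> \<sigma>1"
    using bd1 by (meson abs_ge_zero order_trans)
  have "0 \<le> \<rho>c / s"
    using c_close abs_ge_zero[of "c - c0"] by linarith
  then have c_part: "\<bar>(c - c0) * ?h\<bar> \<le> \<rho>c / s * \<sigma>0"
    unfolding abs_mult hneuron_def by (intro mult_mono c_close bd0) simp_all
  have U_W_part: "\<bar>c0 * (?h - ?h_init)\<bar> \<le> \<sigma>1 * sqrt (1 + B\<^sup>2) * sqrt (\<rho>u\<^sup>2 + \<rho>w\<^sup>2) / s"
  proof -
    have "\<bar>c0 * (?h - ?h_init)\<bar> = \<bar>?h - ?h_init\<bar>"
      using c0 by (simp add: abs_mult)
    also have "\<dots> \<le> \<sigma>1 * (norm (U - U0) + norm U0 * norm (W - W0))"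
      by (rule abs_hneuron_diff_le[OF deriv bd1 X q])
    also have "\<dots> \<le> \<sigma>1 * (1 * (\<rho>u / s) + norm U0 * (\<rho>w / s))"
      using U_close W_close by (intro mult_left_mono add_mono \<sigma>1_nonneg) simp_all
    also have "\<dots> \<le> \<sigma>1 * (sqrt (1\<^sup>2 + (norm U0)\<^sup>2) * sqrt ((\<rho>u / s)\<^sup>2 + (\<rho>w / s)\<^sup>2))"
      by (intro mult_left_mono real_Cauchy_Schwarz_2 \<sigma>1_nonneg)
    also have "\<dots> \<le> \<sigma>1 * (sqrt (1 + B\<^sup>2) * (sqrt (\<rho>u\<^sup>2 + \<rho>w\<^sup>2) / s))"
    proof -
      have rescale: "sqrt ((\<rho>u / s)\<^sup>2 + (\<rho>w / s)\<^sup>2) = sqrt (\<rho>u\<^sup>2 + \<rho>w\<^sup>2) / s"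
        using s by (simp add: power_divide add_divide_distrib[symmetric] real_sqrt_divide)
      have "sqrt (1\<^sup>2 + (norm U0)\<^sup>2) \<le> sqrt (1 + B\<^sup>2)"
        using U0 by (simp add: power_mono)
      then show ?thesis
        unfolding rescale using s by (intro mult_left_mono \<sigma>1_nonneg mult_right_mono) simp_all
    qed
    finally show ?thesis by simp
  qed
  have "c * ?h - c0 * ?h_init = (c - c0) * ?h + c0 * (?h - ?h_init)"
    by (simp add: algebra_simps)
  then have "\<bar>c * ?h - c0 * ?h_init\<bar> \<le> \<bar>(c - c0) * ?h\<bar> + \<bar>c0 * (?h - ?h_init)\<bar>"
    by (simp only: abs_triangle_ineq)
  also have "\<dots> \<le> \<rho>c / s * \<sigma>0 + \<sigma>1 * sqrt (1 + B\<^sup>2) * sqrt (\<rho>u\<^sup>2 + \<rho>w\<^sup>2) / s"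
    using c_part U_W_part by (rule add_mono)
  also have "\<dots> = (\<sigma>1 * sqrt (1 + B\<^sup>2) * sqrt (\<rho>u\<^sup>2 + \<rho>w\<^sup>2) + \<sigma>0 * \<rho>c) / s"
    by (simp add: add_divide_distrib)
  finally show ?thesis .
qed

lemma abs_fnet_le_on_Omega:
  fixes \<sigma> \<sigma>' :: "real \<Rightarrow> real" and U0 :: "nat \<Rightarrow> real^'d"
  assumes deriv: "\<And>x. (\<sigma> has_real_derivative \<sigma>' x) (at x)"
    and bd0: "\<And>x. \<bar>\<sigma> x\<bar> \<le> \<sigma>0" and bd1: "\<And>x. \<bar>\<sigma>' x\<bar> \<le> \<sigma>1"
    and X: "X \<in> token_set" and q: "norm q \<le> 1"
    and m_even: "even m" and m_pos: "0 < m" and init: "sym_init m c0 U0 W0"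
    and event: "event_U CARD('d) m \<delta> U0" and \<rho>u: "0 < \<rho>u"
    and Omega: "(c, U, W) \<in> Omega m \<rho>c \<rho>u \<rho>w c0 U0 W0"
  shows "\<bar>fnet \<sigma> m X q c U W\<bar> \<le> L1 \<sigma>1 CARD('d) m \<delta> \<rho>u * sqrt (\<rho>u\<^sup>2 + \<rho>w\<^sup>2) + \<sigma>0 * \<rho>c"
    (is "_ \<le> ?K")
proof -
  define s where "s = sqrt (real m)"
  have s: "0 < s" "s * s = real m"
    using m_pos by (simp_all add: s_def)
  define gap where "gap i = c i * hneuron \<sigma> X q (U i) (W i) - c0 i * hneuron \<sigma> X q (U0 i) (W0 i)" for i
  have gap_le: "\<bar>gap i\<bar> \<le> ?K / s" if i: "i < m" for i
  proof -
    have close: "\<bar>c i - c0 i\<bar> \<le> \<rho>c / s" "norm (U i - U0 i) \<le> \<rho>u / s" "norm (W i - W0 i) \<le> \<rho>w / s"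
      using Omega i by (simp_all add: Omega_def s_def)
    have "norm (U0 i) \<le> sqrt (real CARD('d)) + sqrt (2 * ln (real m / (2 * \<delta>)))"
      using event i by (simp add: event_U_def)
    moreover have "0 \<le> \<rho>u / s"
      using \<rho>u s by simp
    ultimately have "norm (U0 i) \<le> B_U CARD('d) m \<delta> \<rho>u"
      unfolding B_U_def s_def by linarith
    from neuron_term_diff_le[OF deriv bd0 bd1 X q sym_init_abs_c0[OF init m_even i] this s(1) close]
    show ?thesis
      unfolding gap_def L1_def .
  qed
  have "fnet \<sigma> m X q c U W = (\<Sum>i<m. gap i) / s"
    unfolding fnet_def gap_def s_def sum_subtractf sum_sym_init_eq_0[OF init m_even] by simp
  also have "\<bar>\<dots>\<bar> \<le> (\<Sum>i<m. \<bar>gap i\<bar>) / s"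
    using s by (simp add: divide_right_mono sum_abs)
  also have "\<dots> \<le> (\<Sum>i<m. ?K / s) / s"
    using s gap_le by (intro divide_right_mono sum_mono) simp_all
  also have "\<dots> = real m * ?K / (s * s)"
    by simp
  also have "\<dots> = ?K"
    using m_pos by (simp add: s(2))
  finally show ?thesis .
qed

lemma sets_gauss1 [measurable_cong]: "sets gauss1 = sets borel"
  by (simp add: gauss1_def)

lemma prob_space_gauss1: "prob_space gauss1"
  unfolding gauss1_def by (rule prob_space_normal_density) simp

lemma gauss1_second_moment:
  "integrable gauss1 (\<lambda>x. x\<^sup>2)" "(\<integral>x. x\<^sup>2 \<partial>gauss1) = 1"
  using std_normal_distribution_even_moments[of 1] by (simp_all add: gauss1_def fact_2)

lemma PiM_gauss1_coordinate_second_moment: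
  fixes i :: "'i::finite"
  shows "integrable (PiM UNIV (\<lambda>_::'i. gauss1)) (\<lambda>f. (f i)\<^sup>2)"
    and "(\<integral>f. (f i)\<^sup>2 \<partial>PiM UNIV (\<lambda>_::'i. gauss1)) = 1"
proof -
  have distr: "distr (PiM UNIV (\<lambda>_::'i. gauss1)) gauss1 (\<lambda>f. f i) = gauss1"
    by (rule distr_PiM_component) (simp_all add: prob_space_gauss1)
  have coord: "(\<lambda>f. f i) \<in> measurable (PiM UNIV (\<lambda>_::'i. gauss1)) gauss1"
    by (rule measurable_component_singleton) simp
  have square: "(\<lambda>x::real. x\<^sup>2) \<in> borel_measurable gauss1"
    by measurable
  show "integrable (PiM UNIV (\<lambda>_::'i. gauss1)) (\<lambda>f. (f i)\<^sup>2)"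
    using integrable_distr_eq[OF coord square] gauss1_second_moment(1) distr by simp
  show "(\<integral>f. (f i)\<^sup>2 \<partial>PiM UNIV (\<lambda>_::'i. gauss1)) = 1"
    using integral_distr[OF coord square] gauss1_second_moment(2) distr by simp
qed

lemma borel_measurable_PiM_gauss1_vec:
  "(\<lambda>f. \<chi> i. f i) \<in> borel_measurable (PiM UNIV (\<lambda>_::'i::finite. gauss1))"
  by (rule borel_measurable_vec) (simp, measurable)

lemma borel_measurable_PiM_gauss1_matrix:
  "(\<lambda>f. \<chi> i j. f (i, j)) \<in> (borel_measurable (PiM UNIV (\<lambda>_::'i::finite \<times> 'i. gauss1)) :: (_ \<Rightarrow> real^'i^'i) set)"
  by (intro borel_measurable_vec) (simp, measurable)

lemma prob_space_gauss_vec: "prob_space (gauss_vec :: (real^'d) measure)"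
  unfolding gauss_vec_def
  by (intro prob_space.prob_space_distr prob_space_PiM prob_space_gauss1 borel_measurable_PiM_gauss1_vec)

lemma prob_space_gauss_mat: "prob_space (gauss_mat :: (real^'d^'d) measure)"
  unfolding gauss_mat_def
  by (intro prob_space.prob_space_distr prob_space_PiM prob_space_gauss1 borel_measurable_PiM_gauss1_matrix)

lemma prob_space_init_meas: "prob_space (init_meas :: (real \<times> (real^'d) \<times> (real^'d^'d)) measure)"
  unfolding init_meas_def sign_meas_def
  by (intro prob_space_pair prob_space_measure_pmf prob_space_gauss_vec prob_space_gauss_mat)

lemma gauss_vec_second_moment:
  "integrable gauss_vec (\<lambda>U::real^'d. (norm U)\<^sup>2)"
  "(\<integral>U. (norm U)\<^sup>2 \<partial>(gauss_vec :: (real^'d) measure)) = real CARD('d)"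
proof -
  have norm_sq: "(norm (\<chi> i. f i :: real^'d))\<^sup>2 = (\<Sum>i\<in>UNIV. (f i)\<^sup>2)" for f :: "'d \<Rightarrow> real"
    unfolding power2_norm_eq_inner by (simp add: inner_vec_def power2_eq_square)
  have "(\<lambda>U::real^'d. (norm U)\<^sup>2) \<in> borel_measurable borel"
    by measurable
  note distr_rules = integrable_distr_eq[OF borel_measurable_PiM_gauss1_vec this]
    integral_distr[OF borel_measurable_PiM_gauss1_vec this]
  show "integrable gauss_vec (\<lambda>U::real^'d. (norm U)\<^sup>2)"
    unfolding gauss_vec_def distr_rules norm_sq
    by (intro Bochner_Integration.integrable_sum PiM_gauss1_coordinate_second_moment)
  show "(\<integral>U. (norm U)\<^sup>2 \<partial>(gauss_vec :: (real^'d) measure)) = real CARD('d)"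
    unfolding gauss_vec_def distr_rules norm_sq
    by (simp add: Bochner_Integration.integral_sum PiM_gauss1_coordinate_second_moment)
qed

lemma init_meas_second_moment_U:
  "integrable init_meas (\<lambda>p::real \<times> (real^'d) \<times> (real^'d^'d). (norm (fst (snd p)))\<^sup>2)"
  "(\<integral>p. (norm (fst (snd p)))\<^sup>2 \<partial>(init_meas :: (real \<times> (real^'d) \<times> (real^'d^'d)) measure)) = real CARD('d)"
proof -
  let ?G = "(gauss_vec :: (real^'d) measure) \<Otimes>\<^sub>M (gauss_mat :: (real^'d^'d) measure)"
  have distr_snd: "distr (sign_meas \<Otimes>\<^sub>M ?G) ?G snd = ?G"
    unfolding sign_meas_def
    by (intro prob_space.distr_pair_snd prob_space_measure_pmf prob_space_imp_sigma_finite
        prob_space_pair prob_space_gauss_vec prob_space_gauss_mat)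
  have distr_fst: "distr ?G gauss_vec fst = gauss_vec"
    by (rule prob_space.distr_pair_fst[OF prob_space_gauss_mat])
  have sq: "(\<lambda>U::real^'d. (norm U)\<^sup>2) \<in> borel_measurable gauss_vec"
    by (simp add: gauss_vec_def)
  then have sq_G: "(\<lambda>g. (norm (fst g :: real^'d))\<^sup>2) \<in> borel_measurable ?G"
    by measurable
  have fst_meas: "fst \<in> measurable ?G gauss_vec"
    by (rule measurable_fst)
  have "integrable ?G (\<lambda>g. (norm (fst g :: real^'d))\<^sup>2)"
    using integrable_distr_eq[OF fst_meas sq] gauss_vec_second_moment(1) unfolding distr_fst by blast
  moreover have "(\<integral>g. (norm (fst g :: real^'d))\<^sup>2 \<partial>?G) = real CARD('d)"
    using integral_distr[OF fst_meas sq] gauss_vec_second_moment(2)[where 'd='d]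
    unfolding distr_fst by linarith
  moreover have snd_meas: "snd \<in> measurable (sign_meas \<Otimes>\<^sub>M ?G) ?G"
    by (rule measurable_snd)
  ultimately show
    "integrable init_meas (\<lambda>p::real \<times> (real^'d) \<times> (real^'d^'d). (norm (fst (snd p)))\<^sup>2)"
    "(\<integral>p. (norm (fst (snd p)))\<^sup>2 \<partial>(init_meas :: (real \<times> (real^'d) \<times> (real^'d^'d)) measure)) = real CARD('d)"
    unfolding init_meas_def
    using integrable_distr_eq[OF snd_meas sq_G] integral_distr[OF snd_meas sq_G]
    unfolding distr_snd by simp_all
qed

lemma init_meas_expectation_norm_U:
  "integrable init_meas (\<lambda>p::real \<times> (real^'d) \<times> (real^'d^'d). norm (fst (snd p)))"
  "(\<integral>p. norm (fst (snd p)) \<partial>(init_meas :: (real \<times> (real^'d) \<times> (real^'d^'d)) measure)) \<le> sqrt (real CARD('d))"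
proof -
  interpret prob_space "init_meas :: (real \<times> (real^'d) \<times> (real^'d^'d)) measure"
    by (rule prob_space_init_meas)
  have meas: "(\<lambda>p::real \<times> (real^'d) \<times> (real^'d^'d). norm (fst (snd p))) \<in> borel_measurable init_meas"
    by (simp add: init_meas_def sign_meas_def gauss_vec_def gauss_mat_def)
  show "integrable init_meas (\<lambda>p::real \<times> (real^'d) \<times> (real^'d^'d). norm (fst (snd p)))"
    by (rule square_integrable_imp_integrable[OF meas init_meas_second_moment_U(1)])
  show "(\<integral>p. norm (fst (snd p)) \<partial>(init_meas :: (real \<times> (real^'d) \<times> (real^'d^'d)) measure)) \<le> sqrt (real CARD('d))"
    using expectation_le_sqrt_second_moment[OF meas init_meas_second_moment_U(1)]
    by (simp add: init_meas_second_moment_U(2))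
qed

lemma abs_phi_c_le:
  assumes "\<And>x. \<bar>\<sigma> x\<bar> \<le> \<sigma>0"
  shows "\<bar>phi_c \<sigma> X q p\<bar> \<le> \<sigma>0"
  using assms by (simp add: phi_c_def split: prod.split)

lemma norm_phi_u_le:
  assumes bd1: "\<And>x. \<bar>\<sigma>' x\<bar> \<le> \<sigma>1" and X: "X \<in> token_set"
  shows "norm (phi_u \<sigma>' X q p) \<le> \<sigma>1"
proof -
  obtain c U W where p: "p = (c, U, W)"
    by (cases p) auto
  have "norm (phi_u \<sigma>' X q p) = \<bar>\<sigma>' (U \<bullet> attn X q W)\<bar> * norm (attn X q W)"
    by (simp add: p phi_u_def)
  also have "\<dots> \<le> \<sigma>1 * 1"
    using bd1 norm_attn_le_1[OF X] by (intro mult_mono) (auto intro: order_trans[OF abs_ge_zero])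
  finally show ?thesis by simp
qed

lemma norm_phi_w_le:
  assumes bd1: "\<And>x. \<bar>\<sigma>' x\<bar> \<le> \<sigma>1" and X: "X \<in> token_set" and q: "norm q \<le> 1"
  shows "norm (phi_w \<sigma>' X q p) \<le> \<sigma>1 * norm (fst (snd p))"
proof -
  obtain c U W where p: "p = (c, U, W)"
    by (cases p) auto
  have "norm (phi_w \<sigma>' X q p) = \<bar>\<sigma>' (U \<bullet> attn X q W)\<bar> * (norm (Mmat X q W *v U) * norm q)"
    by (simp add: p phi_w_def norm_outer_product)
  also have "\<dots> \<le> \<sigma>1 * (norm U * 1)"
    using bd1 norm_Mmat_mult_le[OF X] q
    by (intro mult_mono) (auto intro: order_trans[OF abs_ge_zero])
  finally show ?thesis by (simp add: p)
qed

lemma abs_ftilde_le: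
  fixes \<sigma> \<sigma>' :: "real \<Rightarrow> real" and X :: "real^'T^'d"
    and vc :: "real \<times> (real^'d) \<times> (real^'d^'d) \<Rightarrow> real"
    and vu :: "real \<times> (real^'d) \<times> (real^'d^'d) \<Rightarrow> real^'d"
    and vw :: "real \<times> (real^'d) \<times> (real^'d^'d) \<Rightarrow> real^'d^'d"
  assumes bd0: "\<And>x. \<bar>\<sigma> x\<bar> \<le> \<sigma>0" and bd1: "\<And>x. \<bar>\<sigma>' x\<bar> \<le> \<sigma>1"
    and X: "X \<in> token_set" and q: "norm q \<le> 1"
    and vc: "\<And>p. \<bar>vc p\<bar> \<le> \<nu>c" and vu: "\<And>p. norm (vu p) \<le> \<nu>u" and vw: "\<And>p. norm (vw p) \<le> \<nu>w"
  shows "\<bar>ftilde \<sigma> \<sigma>' X q vc vu vw\<bar> \<le> \<sigma>0 * \<nu>c + \<sigma>1 * \<nu>u + \<sigma>1 * sqrt (real CARD('d)) * \<nu>w"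
proof -
  let ?M = "init_meas :: (real \<times> (real^'d) \<times> (real^'d^'d)) measure"
  interpret prob_space ?M
    by (rule prob_space_init_meas)
  have \<sigma>0: "0 \<le> \<sigma>0" and \<sigma>1: "0 \<le> \<sigma>1" and \<nu>w: "0 \<le> \<nu>w"
    using bd0 bd1 vw by (meson abs_ge_zero norm_ge_zero order_trans)+
  have "\<bar>phi_c \<sigma> X q p * vc p\<bar> \<le> \<sigma>0 * \<nu>c" for p
    unfolding abs_mult by (intro mult_mono abs_phi_c_le[of \<sigma> \<sigma>0, OF bd0] vc \<sigma>0) simp
  then have "\<bar>\<integral>p. phi_c \<sigma> X q p * vc p \<partial>?M\<bar> \<le> (\<integral>p. \<sigma>0 * \<nu>c \<partial>?M)"
    by (intro abs_integral_le_integral) simp_all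
  moreover have "\<bar>phi_u \<sigma>' X q p \<bullet> vu p\<bar> \<le> \<sigma>1 * \<nu>u" for p
    by (rule order_trans[OF Cauchy_Schwarz_ineq2])
      (intro mult_mono norm_phi_u_le[of \<sigma>' \<sigma>1, OF bd1 X] vu \<sigma>1 norm_ge_zero)
  then have "\<bar>\<integral>p. phi_u \<sigma>' X q p \<bullet> vu p \<partial>?M\<bar> \<le> (\<integral>p. \<sigma>1 * \<nu>u \<partial>?M)"
    by (intro abs_integral_le_integral) simp_all
  moreover have "\<bar>\<integral>p. phi_w \<sigma>' X q p \<bullet> vw p \<partial>?M\<bar> \<le> (\<integral>p. \<sigma>1 * \<nu>w * norm (fst (snd p)) \<partial>?M)"
  proof (rule abs_integral_le_integral)
    show "integrable ?M (\<lambda>p. \<sigma>1 * \<nu>w * norm (fst (snd p)))"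
      using init_meas_expectation_norm_U(1)[where 'd='d] by simp
    fix p
    have "\<bar>phi_w \<sigma>' X q p \<bullet> vw p\<bar> \<le> \<sigma>1 * norm (fst (snd p)) * \<nu>w"
      using norm_phi_w_le[of \<sigma>' \<sigma>1, OF bd1 X q, of p] vw[of p] \<sigma>1
      by (intro order_trans[OF Cauchy_Schwarz_ineq2] mult_mono) auto
    then show "\<bar>phi_w \<sigma>' X q p \<bullet> vw p\<bar> \<le> \<sigma>1 * \<nu>w * norm (fst (snd p))"
      by (simp add: mult_ac)
  qed
  moreover have "(\<integral>p. \<sigma>1 * \<nu>w * norm (fst (snd p)) \<partial>?M) \<le> \<sigma>1 * \<nu>w * sqrt (real CARD('d))"
    using init_meas_expectation_norm_U(2)[where 'd='d] \<sigma>1 \<nu>w by (simp add: mult_left_mono)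
  ultimately show ?thesis
    unfolding ftilde_def by (simp add: prob_space mult_ac)
qed

theorem lemma6:
  fixes \<sigma> \<sigma>' \<sigma>'' :: "real \<Rightarrow> real"
    and \<sigma>0 \<sigma>1 \<sigma>2 :: real
    and q :: "real^'T^'d \<Rightarrow> real^'d"
    and m :: nat and \<delta> :: real
    and c0 :: "nat \<Rightarrow> real" and U0 :: "nat \<Rightarrow> real^'d" and W0 :: "nat \<Rightarrow> real^'d^'d"
  assumes deriv1: "\<And>x. (\<sigma> has_real_derivative \<sigma>' x) (at x)"
    and deriv2: "\<And>x. (\<sigma>' has_real_derivative \<sigma>'' x) (at x)"
    and bd0: "\<And>x. \<bar>\<sigma> x\<bar> \<le> \<sigma>0"
    and bd1: "\<And>x. \<bar>\<sigma>' x\<bar> \<le> \<sigma>1"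
    and bd2: "\<And>x. \<bar>\<sigma>'' x\<bar> \<le> \<sigma>2"
    and q_bd: "\<And>X. norm (q X) \<le> 1"
    and m_even: "even m" and m_pos: "0 < m"
    and init: "sym_init m c0 U0 W0"
    and \<delta>_pos: "0 < \<delta>" and \<delta>_lt1: "\<delta> < 1"
    and event: "event_U CARD('d) m \<delta> U0"
  shows "(\<forall>\<rho>c \<rho>u \<rho>w c U W. 0 < \<rho>c \<and> 0 < \<rho>u \<and> 0 < \<rho>w
            \<and> (c, U, W) \<in> Omega m \<rho>c \<rho>u \<rho>w c0 U0 W0 \<longrightarrow>
            (\<forall>X \<in> token_set. \<bar>fnet \<sigma> m X (q X) c U W\<bar>
               \<le> L1 \<sigma>1 CARD('d) m \<delta> \<rho>u * sqrt (\<rho>u^2 + \<rho>w^2) + \<sigma>0 * \<rho>c))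
       \<and> (\<forall>\<nu>c \<nu>u \<nu>w vc vu vw. 0 < \<nu>c \<and> 0 < \<nu>u \<and> 0 < \<nu>w
            \<and> vc \<in> borel_measurable init_meas \<and> vu \<in> borel_measurable init_meas
            \<and> vw \<in> borel_measurable init_meas
            \<and> (\<forall>p. \<bar>vc p\<bar> \<le> \<nu>c) \<and> (\<forall>p. norm (vu p) \<le> \<nu>u) \<and> (\<forall>p. norm (vw p) \<le> \<nu>w) \<longrightarrow>
            (\<forall>X \<in> token_set. \<bar>ftilde \<sigma> \<sigma>' X (q X) vc vu vw\<bar>
               \<le> \<sigma>0 * \<nu>c + \<sigma>1 * \<nu>u + \<sigma>1 * sqrt (real CARD('d)) * \<nu>w))"
  apply (intro conjI allI impI ballI)
  subgoal by (rule abs_fnet_le_on_Omega[OF deriv1 bd0 bd1 _ q_bd m_even m_pos init event]) auto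
  subgoal by (rule abs_ftilde_le[OF bd0 bd1 _ q_bd]) auto
  done

end
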